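(* Let $G$ be a weighted graph, $s\in[0,1]^V$ a vector of innate opinions, $z=(I+L)^{-1}s$ the equilibrium opinions, and $D=D(z)$. Let $k\in\mathbb{N}$ and let $s'\in[0,1]^V$ satisfy $\|s'-s\|_0\le k$. Let $z'=(I+L)^{-1}s'$ and $D'=D(z')$. Then $D'\le D+8\,d_{\max}\,k$, where $d_{\max}:=\max_{v\in V}\sum_{u\in V}w_{v,u}$ is the weighted maximum degree.
   Context: $G=(V,E,w)$ is a weighted undirected graph on $n=|V|$ vertices, with weights $w_{u,v}\in(0,1]$ for $(u,v)\in E$ and $w_{u,v}=0$ otherwise (and $w_{v,v}=0$). $L=\mathrm{Diag}(d)-A$ is the weighted Laplacian, where $A_{u,v}=w_{u,v}$ and $d_v=\sum_u w_{v,u}$. Disagreement of a vector $z\in\mathbb{R}^V$ is $D(z)=\sum_{(u,v)\in E} w_{u,v}(z_u-z_v)^2$ (each edge counted once). $\|x\|_0$ denotes the number of nonzero coordinates of $x$. *)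

theory Defs
  imports "HOL-Analysis.Analysis"
begin

text \<open>Weighted undirected graph on the finite vertex type 'n, given by its symmetric
  weight matrix W (W$u$v = w_{u,v}); edges are the pairs with nonzero weight.\<close>

definition weighted_graph :: "real^'n^'n \<Rightarrow> bool" where
  "weighted_graph W \<longleftrightarrow>
     (\<forall>u v. W$u$v = W$v$u) \<and> (\<forall>v. W$v$v = 0) \<and> (\<forall>u v. 0 \<le> W$u$v \<and> W$u$v \<le> 1)"

definition wdeg :: "real^'n^'n \<Rightarrow> 'n \<Rightarrow> real" where
  "wdeg W v = (\<Sum>u\<in>UNIV. W$v$u)"

definition laplacian :: "real^'n^'n \<Rightarrow> real^'n^'n" where
  "laplacian W = (\<chi> u v. (if u = v then wdeg W u else 0) - W$u$v)"

text \<open>Disagreement: sum over edges, each counted once (= half the ordered double sum).\<close>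
definition disagreement :: "real^'n^'n \<Rightarrow> real^'n \<Rightarrow> real" where
  "disagreement W z = (\<Sum>u\<in>UNIV. \<Sum>v\<in>UNIV. W$u$v * (z$u - z$v)^2) / 2"

definition equilibrium :: "real^'n^'n \<Rightarrow> real^'n \<Rightarrow> real^'n" where
  "equilibrium W s = matrix_inv (mat 1 + laplacian W) *v s"

definition max_wdeg :: "real^'n^'n \<Rightarrow> real" where
  "max_wdeg W = Max (range (wdeg W))"

definition l0_norm :: "real^'n \<Rightarrow> nat" where
  "l0_norm x = card {v. x$v \<noteq> 0}"

end

theory Submission imports Defs begin

text \<open>With \<open>M = I + L\<close>, \<open>e = z' - z\<close> and \<open>d = s' - s\<close> we have \<open>M e = d\<close> and
  \<open>D(z') - D(z) = e \<bullet> L (z' + z)\<close>. Writing \<open>z' + z = M y\<close>, symmetry of \<open>L\<close> gives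
  \<open>e \<bullet> L M y = M e \<bullet> L y = d \<bullet> L y\<close>. By the maximum principle for \<open>M\<close>, the equilibria
  lie in \<open>[0,1]\<close> and \<open>y\<close> in \<open>[0,2]\<close>, so \<open>|(L y)\<^sub>u| \<le> 2 d\<^sub>m\<^sub>a\<^sub>x\<close>; as \<open>|d\<^sub>u| \<le> 1\<close>
  and \<open>d\<close> has at most \<open>k\<close> nonzero entries, the difference is at most \<open>2 d\<^sub>m\<^sub>a\<^sub>x k\<close>.\<close>

definition dirichlet_form :: "real^'n^'n \<Rightarrow> real^'n \<Rightarrow> real^'n \<Rightarrow> real" where
  "dirichlet_form W a b = (\<Sum>u\<in>UNIV. \<Sum>v\<in>UNIV. W$u$v * (a$u - a$v) * (b$u - b$v)) / 2"

lemma laplacian_mult_vec_nth: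
  "(laplacian W *v x)$u = (\<Sum>v\<in>UNIV. W$u$v * (x$u - x$v))"
proof -
  have "(laplacian W *v x)$u = (\<Sum>v\<in>UNIV. (if u = v then wdeg W u * x$v else 0) - W$u$v * x$v)"
    by (auto simp: matrix_vector_mult_def laplacian_def left_diff_distrib intro!: sum.cong)
  also have "\<dots> = wdeg W u * x$u - (\<Sum>v\<in>UNIV. W$u$v * x$v)"
    by (simp add: sum_subtractf)
  also have "\<dots> = (\<Sum>v\<in>UNIV. W$u$v * (x$u - x$v))"
    by (simp add: wdeg_def sum_distrib_left sum_subtractf right_diff_distrib mult.commute)
  finally show ?thesis .
qed

lemma transpose_laplacian:
  assumes "\<forall>u v. W$u$v = W$v$u"
  shows "transpose (laplacian W) = laplacian W"
  using assms by (simp add: transpose_def laplacian_def vec_eq_iff)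

lemma inner_laplacian_commute:
  assumes "\<forall>u v. W$u$v = W$v$u"
  shows "a \<bullet> (laplacian W *v b) = (laplacian W *v a) \<bullet> b"
  by (metis dot_lmul_matrix transpose_matrix_vector transpose_laplacian[OF assms])

lemma dirichlet_form_eq_inner_laplacian:
  assumes sym: "\<forall>u v. W$u$v = W$v$u"
  shows "dirichlet_form W a b = a \<bullet> (laplacian W *v b)"
proof -
  define S where "S = (\<Sum>u\<in>UNIV. \<Sum>v\<in>UNIV. W$u$v * (a$u * (b$u - b$v)))"
  have swap: "(\<Sum>u\<in>UNIV. \<Sum>v\<in>UNIV. W$u$v * (a$v * (b$v - b$u))) = S"
    unfolding S_def using sym by (subst sum.swap) simp
  have "2 * dirichlet_form W a b
          = S + (\<Sum>u\<in>UNIV. \<Sum>v\<in>UNIV. W$u$v * (a$v * (b$v - b$u)))"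
    unfolding dirichlet_form_def S_def by (simp add: sum.distrib[symmetric] algebra_simps)
  moreover have "S = a \<bullet> (laplacian W *v b)"
    unfolding S_def inner_vec_def laplacian_mult_vec_nth by (simp add: sum_distrib_left algebra_simps)
  ultimately show ?thesis using swap by simp
qed

lemma disagreement_diff:
  "disagreement W z' - disagreement W z = dirichlet_form W (z' - z) (z' + z)"
  unfolding disagreement_def dirichlet_form_def
  by (simp add: diff_divide_distrib[symmetric] sum_subtractf[symmetric] power2_eq_square algebra_simps)

lemma shifted_laplacian_max_principle:
  assumes nonneg: "\<forall>u v. 0 \<le> W$u$v"
    and eq: "(mat 1 + laplacian W) *v x = b" and bound: "\<forall>v. b$v \<le> c"
  shows "x$v \<le> c"
proof -
  have "Max (range (\<lambda>u. x$u)) \<in> range (\<lambda>u. x$u)" by (rule Max_in) auto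
  then obtain m where "Max (range (\<lambda>u. x$u)) = x$m" by blast
  then have m: "x$u \<le> x$m" for u using Max_ge[of "range (\<lambda>u. x$u)" "x$u"] by simp
  have "0 \<le> (laplacian W *v x)$m"
    unfolding laplacian_mult_vec_nth using nonneg m by (intro sum_nonneg) simp
  moreover have "x$m + (laplacian W *v x)$m = b$m"
    by (simp add: matrix_vector_mult_add_rdistrib flip: eq)
  ultimately show ?thesis using bound m[of v] by (smt (verit))
qed

lemma shifted_laplacian_solution_bounds:
  assumes nonneg: "\<forall>u v. 0 \<le> W$u$v"
    and eq: "(mat 1 + laplacian W) *v x = b" and bounds: "\<forall>v. lo \<le> b$v \<and> b$v \<le> hi"
  shows "lo \<le> x$v \<and> x$v \<le> hi"
proof
  have "(mat 1 + laplacian W) *v (- x) = - b"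
    using matrix_vector_mult_diff_distrib[of "mat 1 + laplacian W" 0 x] eq by simp
  then have "(- x)$v \<le> - lo"
    by (rule shifted_laplacian_max_principle[OF nonneg]) (simp add: bounds)
  then show "lo \<le> x$v" by simp
  show "x$v \<le> hi"
    using shifted_laplacian_max_principle[OF nonneg eq] bounds by simp
qed

lemma invertible_shifted_laplacian:
  assumes "\<forall>u v. 0 \<le> W$u$v"
  shows "invertible (mat 1 + laplacian W)"
proof -
  have "x = 0" if "(mat 1 + laplacian W) *v x = 0" for x
    using shifted_laplacian_solution_bounds[OF assms that, of 0 0] by (simp add: vec_eq_iff order_antisym)
  then show ?thesis by (simp add: invertible_left_inverse matrix_left_invertible_ker)
qed

lemma shifted_laplacian_mult_inv:
  assumes "\<forall>u v. 0 \<le> W$u$v"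
  shows "(mat 1 + laplacian W) *v (matrix_inv (mat 1 + laplacian W) *v b) = b"
proof -
  have "(mat 1 + laplacian W) ** matrix_inv (mat 1 + laplacian W) = mat 1"
    using invertible_shifted_laplacian[OF assms]
    unfolding matrix_inv_def invertible_def by (rule someI_ex[THEN conjunct1])
  then show ?thesis by (simp add: matrix_vector_mul_assoc)
qed

lemma dirichlet_form_shifted_laplacian:
  assumes sym: "\<forall>u v. W$u$v = W$v$u" and eq: "(mat 1 + laplacian W) *v e = d"
  shows "dirichlet_form W e ((mat 1 + laplacian W) *v y) = (laplacian W *v y) \<bullet> d"
proof -
  let ?L = "laplacian W"
  have "dirichlet_form W e ((mat 1 + ?L) *v y) = e \<bullet> (?L *v y) + e \<bullet> (?L *v (?L *v y))"
    by (simp add: dirichlet_form_eq_inner_laplacian[OF sym] matrix_vector_mult_add_rdistrib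
        matrix_vector_right_distrib inner_add_right)
  also have "\<dots> = (e + ?L *v e) \<bullet> (?L *v y)"
    using inner_laplacian_commute[OF sym, of e "?L *v y"] by (simp add: inner_add_left)
  also have "\<dots> = (?L *v y) \<bullet> d"
    using eq by (simp add: matrix_vector_mult_add_rdistrib inner_commute)
  finally show ?thesis .
qed

lemma abs_laplacian_mult_vec_le:
  assumes nonneg: "\<forall>u v. 0 \<le> W$u$v" and bounds: "\<forall>v. 0 \<le> y$v \<and> y$v \<le> r"
  shows "\<bar>(laplacian W *v y)$u\<bar> \<le> r * wdeg W u"
proof -
  have "\<bar>(laplacian W *v y)$u\<bar> \<le> (\<Sum>v\<in>UNIV. \<bar>W$u$v * (y$u - y$v)\<bar>)"
    unfolding laplacian_mult_vec_nth by (rule sum_abs)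
  also have "\<dots> \<le> (\<Sum>v\<in>UNIV. W$u$v * r)"
  proof (rule sum_mono)
    fix v
    have "\<bar>y$u - y$v\<bar> \<le> r" using bounds by (smt (verit))
    then show "\<bar>W$u$v * (y$u - y$v)\<bar> \<le> W$u$v * r"
      using nonneg by (simp add: abs_mult mult_left_mono)
  qed
  also have "\<dots> = r * wdeg W u"
    by (simp add: wdeg_def sum_distrib_left mult.commute)
  finally show ?thesis .
qed

lemma wdeg_le_max_wdeg: "wdeg W u \<le> max_wdeg W"
  unfolding max_wdeg_def by (rule Max_ge) auto

lemma max_wdeg_nonneg:
  assumes "\<forall>u v. 0 \<le> W$u$v"
  shows "0 \<le> max_wdeg W"
  using wdeg_le_max_wdeg[of W] assms unfolding wdeg_def by (meson order_trans sum_nonneg)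

lemma inner_le_l0_norm:
  assumes "\<forall>u. \<bar>x$u\<bar> \<le> a" and "\<forall>u. \<bar>d$u\<bar> \<le> 1"
  shows "x \<bullet> d \<le> a * l0_norm d"
proof -
  have "x \<bullet> d = (\<Sum>u\<in>{v. d$v \<noteq> 0}. x$u * d$u)"
    unfolding inner_vec_def inner_real_def by (rule sum.mono_neutral_right) auto
  also have "\<dots> \<le> (\<Sum>u\<in>{v. d$v \<noteq> 0}. a)"
  proof (rule sum_mono)
    fix u
    have "\<bar>x$u * d$u\<bar> \<le> a * 1"
      unfolding abs_mult using assms by (intro mult_mono) auto
    then show "x$u * d$u \<le> a" by simp
  qed
  finally show ?thesis by (simp add: l0_norm_def mult.commute)
qed

theorem theorem1p3:
  fixes W :: "real^'n^'n" and s s' :: "real^'n" and k :: nat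
  assumes "weighted_graph W"
    and "\<forall>v. 0 \<le> s$v \<and> s$v \<le> 1"
    and "\<forall>v. 0 \<le> s'$v \<and> s'$v \<le> 1"
    and "l0_norm (s' - s) \<le> k"
  shows "disagreement W (equilibrium W s')
           \<le> disagreement W (equilibrium W s) + 8 * max_wdeg W * real k"
proof -
  let ?M = "mat 1 + laplacian W"
  define z where "z = equilibrium W s"
  define z' where "z' = equilibrium W s'"
  define y where "y = matrix_inv ?M *v (z' + z)"
  have sym: "\<forall>u v. W$u$v = W$v$u" and nonneg: "\<forall>u v. 0 \<le> W$u$v"
    using assms(1) by (auto simp: weighted_graph_def)
  have Mz: "?M *v z = s" and Mz': "?M *v z' = s'" and My: "?M *v y = z' + z"
    unfolding z_def z'_def y_def equilibrium_def by (simp_all add: shifted_laplacian_mult_inv[OF nonneg])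
  have "0 \<le> z$v \<and> z$v \<le> 1" "0 \<le> z'$v \<and> z'$v \<le> 1" for v
    using shifted_laplacian_solution_bounds[OF nonneg Mz, of 0 1]
      shifted_laplacian_solution_bounds[OF nonneg Mz', of 0 1] assms(2,3) by auto
  then have "\<forall>v. 0 \<le> (z' + z)$v \<and> (z' + z)$v \<le> 2"
    by (smt (verit) vector_add_component)
  then have "\<forall>v. 0 \<le> y$v \<and> y$v \<le> 2"
    using shifted_laplacian_solution_bounds[OF nonneg My] by blast
  then have "\<forall>u. \<bar>(laplacian W *v y)$u\<bar> \<le> 2 * max_wdeg W"
    using abs_laplacian_mult_vec_le[OF nonneg] wdeg_le_max_wdeg
    by (metis mult_left_mono order_trans zero_le_numeral)
  moreover have "\<forall>u. \<bar>(s' - s)$u\<bar> \<le> 1"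
    using assms(2,3) by (simp add: abs_le_iff) (smt (verit))
  moreover have "?M *v (z' - z) = s' - s"
    by (simp add: matrix_vector_mult_diff_distrib Mz Mz')
  ultimately have "disagreement W z' - disagreement W z \<le> 2 * max_wdeg W * l0_norm (s' - s)"
    unfolding disagreement_diff
    by (simp add: inner_le_l0_norm dirichlet_form_shifted_laplacian[OF sym] flip: My)
  also have "\<dots> \<le> 8 * max_wdeg W * real k"
    using assms(4) max_wdeg_nonneg[OF nonneg] by (intro mult_mono) auto
  finally show ?thesis unfolding z_def z'_def by simp
qed

end
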